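(* Let $k$ be a non-archimedean local field of residue characteristic $2$. Let $B(x)=\Delta x^2$ on $k$, where $\Delta$ is a non-square unit of $\mathfrak o$ with quadratic defect $\varpi^d\mathfrak o$. Let $z=q^{-\beta}$, $w=zq^{-1}$, and $t\in\mathfrak o\setminus\{0\}$ with $|t|=q^{-T}$. If $|2|\ge|\varpi^d t^2|$, then \[ X^B(\beta;t^2)=|\varpi|^{\lceil e/2\rceil}\,\frac{1-(zw)^{T+\lceil (d+1-e)/2\rceil}}{1-zw} + w\,|\varpi|^{\lfloor e/2\rfloor}\,\frac{1-(zw)^{T+\lfloor (d+1-e)/2\rfloor}}{1-zw}, \] and $X^B(\beta;t^2)=0$ otherwise.
   Context: $k$ has ring of integers $\mathfrak o$, uniformizer $\varpi$, residue field of cardinality $q$, absolute value normalized by $|\varpi|=q^{-1}$, and $e=\operatorname{ord}(2)$ is the ramification index. On $\mathfrak o^n$ use the additive Haar measure of total mass $1$. For a quadratic form $B$ on $k^n$, $\rho\in\mathfrak o$ and integer $\ell\ge0$: $X_\ell^B(\rho)=\operatorname{meas}\{x\in\mathfrak o^n: B(x)-\rho\in 2\varpi^\ell\mathfrak o\}$ and $X^B(\beta;\rho)=\sum_{\ell\ge0}z^\ell X_\ell^B(\rho)$ with $z=q^{-\beta}$. The quadratic defect of $\rho\in k$ is the intersection of all ideals $b\mathfrak o$ over those $b\in k$ for which $\rho-b$ is a square in $k$. *)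

theory Defs
  imports "HOL-Analysis.Analysis"
begin

text \<open>A discretely valued field is given by a field type and a normalized
  valuation v on its nonzero elements (the value at 0 is irrelevant; 0 is
  treated as having valuation +infinity via vge).\<close>

definition vge :: "('a::field \<Rightarrow> int) \<Rightarrow> 'a \<Rightarrow> int \<Rightarrow> bool" where
  "vge v x N \<longleftrightarrow> x = 0 \<or> N \<le> v x"

definition discrete_val :: "('a::field \<Rightarrow> int) \<Rightarrow> bool" where
  "discrete_val v \<longleftrightarrow>
     (\<forall>x y. x \<noteq> 0 \<and> y \<noteq> 0 \<longrightarrow> v (x * y) = v x + v y) \<and>
     (\<forall>x y. x \<noteq> 0 \<and> y \<noteq> 0 \<and> x + y \<noteq> 0 \<longrightarrow> min (v x) (v y) \<le> v (x + y)) \<and>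
     (\<forall>n. \<exists>x. x \<noteq> 0 \<and> v x = n)"

definition ints :: "('a::field \<Rightarrow> int) \<Rightarrow> 'a set" where
  "ints v = {x. vge v x 0}"

definition val_complete :: "('a::field \<Rightarrow> int) \<Rightarrow> bool" where
  "val_complete v \<longleftrightarrow>
     (\<forall>f :: nat \<Rightarrow> 'a. (\<forall>N. \<exists>M. \<forall>m\<ge>M. \<forall>n\<ge>M. vge v (f m - f n) N) \<longrightarrow>
        (\<exists>L. \<forall>N. \<exists>M. \<forall>n\<ge>M. vge v (f n - L) N))"

definition vball :: "('a::field \<Rightarrow> int) \<Rightarrow> nat \<Rightarrow> 'a \<Rightarrow> 'a set" where
  "vball v N x = {y \<in> ints v. vge v (y - x) (int N)}"

definition residue_classes :: "('a::field \<Rightarrow> int) \<Rightarrow> 'a set set" where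
  "residue_classes v = vball v 1 ` ints v"

definition resq :: "('a::field \<Rightarrow> int) \<Rightarrow> nat" where
  "resq v = card (residue_classes v)"

definition nonarch_local_field :: "('a::field \<Rightarrow> int) \<Rightarrow> bool" where
  "nonarch_local_field v \<longleftrightarrow> discrete_val v \<and> val_complete v \<and> finite (residue_classes v)"

definition absv :: "('a::field \<Rightarrow> int) \<Rightarrow> 'a \<Rightarrow> real" where
  "absv v x = (if x = 0 then 0 else real (resq v) powi (- v x))"

text \<open>Haar measure on o of total mass 1, for compact subsets S of o:
  infimum over N of (number of cosets of varpi^N o meeting S) / q^N.\<close>
definition haar :: "('a::field \<Rightarrow> int) \<Rightarrow> 'a set \<Rightarrow> real" where
  "haar v S = (INF N::nat. real (card (vball v N ` S)) / real (resq v) ^ N)"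

definition pideal :: "('a::field \<Rightarrow> int) \<Rightarrow> 'a \<Rightarrow> 'a set" where
  "pideal v b = {b * y | y. y \<in> ints v}"

definition qdefect :: "('a::field \<Rightarrow> int) \<Rightarrow> 'a \<Rightarrow> 'a set" where
  "qdefect v \<rho> = \<Inter> {pideal v b | b. \<exists>s. \<rho> - b = s ^ 2}"

definition Xl :: "('a::field \<Rightarrow> int) \<Rightarrow> 'a \<Rightarrow> ('a \<Rightarrow> 'a) \<Rightarrow> 'a \<Rightarrow> nat \<Rightarrow> real" where
  "Xl v \<pi> B \<rho> l = haar v {x \<in> ints v. B x - \<rho> \<in> pideal v (2 * \<pi> ^ l)}"

definition XB :: "('a::field \<Rightarrow> int) \<Rightarrow> 'a \<Rightarrow> ('a \<Rightarrow> 'a) \<Rightarrow> complex \<Rightarrow> 'a \<Rightarrow> complex" where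
  "XB v \<pi> B \<beta> \<rho> =
     (\<Sum>l. (of_nat (resq v) powr (- \<beta>)) ^ l * complex_of_real (Xl v \<pi> B \<rho> l))"

end

theory Submission
  imports Defs
begin

text \<open>Write \<open>e = v 2\<close>. For a unit \<open>s\<close> with \<open>v (\<Delta> - s\<^sup>2) = d\<close>, the element
  \<open>a = t / s\<close> has \<open>v a = T\<close> and \<open>v (\<Delta> a\<^sup>2 - t\<^sup>2) = 2 T + d\<close>, and no \<open>x\<close> does
  better: \<open>v (\<Delta> x\<^sup>2 - t\<^sup>2) \<le> 2 T + d\<close>. Because \<open>d \<le> 2 e\<close>, for \<open>n \<le> 2 T + d\<close> the
  \<open>x\<close> with \<open>v (\<Delta> x\<^sup>2 - t\<^sup>2) \<ge> n\<close> are exactly the points of the ball of radius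
  \<open>q^-\<lceil>n/2\<rceil>\<close> around \<open>a\<close>. So \<open>X\<^sub>l = q^-\<lceil>(e + l)/2\<rceil>\<close> while \<open>e + l \<le> 2 T + d\<close>
  and \<open>X\<^sub>l = 0\<close> afterwards, and the series is the sum of two finite geometric
  progressions, over even and over odd \<open>l\<close>, of ratio \<open>z w = z\<^sup>2 / q\<close>.\<close>

lemma card_image_eq_card_image:
  assumes "\<And>x y. x \<in> A \<Longrightarrow> y \<in> A \<Longrightarrow> f x = f y \<longleftrightarrow> g x = g y"
  shows "card (f ` A) = card (g ` A)"
proof -
  let ?P = "(\<lambda>x. (f x, g x)) ` A"
  have "inj_on fst ?P" "inj_on snd ?P" using assms by (auto simp: inj_on_def)
  moreover have "fst ` ?P = f ` A" "snd ` ?P = g ` A" by (auto simp: image_image)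
  ultimately show ?thesis by (metis card_image)
qed

lemma power_int_le_power_int_iff:
  fixes a :: "'a::linordered_field"
  assumes "1 < a"
  shows "a powi m \<le> a powi n \<longleftrightarrow> m \<le> n"
  using assms power_int_increasing[of m n a] power_int_strict_increasing[of n m a]
  by (cases "m \<le> n") auto

lemma floor_half_of_int: "\<lfloor>real_of_int m / 2\<rfloor> = m div 2"
  using floor_divide_of_int_eq[of m 2] by simp

lemma ceiling_half_of_int: "\<lceil>real_of_int m / 2\<rceil> = (m + 1) div 2"
proof -
  have "\<lceil>real_of_int m / 2\<rceil> = - ((- m) div 2)"
    using floor_half_of_int[of "- m"] by (simp add: ceiling_def)
  also have "\<dots> = (m + 1) div 2" by presburger
  finally show ?thesis .
qed

lemma sum_lessThan_split_parity:
  fixes f :: "nat \<Rightarrow> 'a::comm_monoid_add"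
  shows "(\<Sum>l<N. f l) = (\<Sum>i<(N + 1) div 2. f (2 * i)) + (\<Sum>i<N div 2. f (2 * i + 1))"
proof (induction N)
  case (Suc N)
  show ?case
  proof (cases "even N")
    case True
    then have "(Suc N + 1) div 2 = Suc ((N + 1) div 2)" "Suc N div 2 = N div 2"
      "2 * ((N + 1) div 2) = N" by presburger+
    then show ?thesis using Suc.IH by (simp add: ac_simps)
  next
    case False
    then have "(Suc N + 1) div 2 = (N + 1) div 2" "Suc N div 2 = Suc (N div 2)"
      "2 * (N div 2) + 1 = N" by presburger+
    then show ?thesis using Suc.IH by (simp add: ac_simps)
  qed
qed simp

lemma sum_ceiling_half_powers:
  fixes z :: complex and q :: real and E :: int
  defines "x \<equiv> z * (z / complex_of_real q)"
  assumes "q \<noteq> 0" "0 \<le> E" "x \<noteq> 1"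
  shows "(\<Sum>l<N. z ^ l * complex_of_real (1 / q ^ nat ((E + int l + 1) div 2)))
    = complex_of_real (1 / q ^ nat ((E + 1) div 2)) * (1 - x ^ ((N + 1) div 2)) / (1 - x)
      + z / complex_of_real q * complex_of_real (1 / q ^ nat (E div 2)) * (1 - x ^ (N div 2)) / (1 - x)"
proof -
  let ?f = "\<lambda>l. z ^ l * complex_of_real (1 / q ^ nat ((E + int l + 1) div 2))"
  have "nat ((E + int (2 * i) + 1) div 2) = nat ((E + 1) div 2) + i"
    "nat ((E + int (2 * i + 1) + 1) div 2) = nat (E div 2) + 1 + i" for i
    using assms(3) by simp_all
  then have even: "?f (2 * i) = complex_of_real (1 / q ^ nat ((E + 1) div 2)) * x ^ i"
    and odd: "?f (2 * i + 1) = z / complex_of_real q * complex_of_real (1 / q ^ nat (E div 2)) * x ^ i"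
    for i
    using assms(2) unfolding x_def
    by (simp_all add: power_add power_mult_distrib power_mult power2_eq_square field_simps)
  have "(\<Sum>l<N. ?f l) = (\<Sum>i<(N + 1) div 2. ?f (2 * i)) + (\<Sum>i<N div 2. ?f (2 * i + 1))"
    by (rule sum_lessThan_split_parity)
  also have "\<dots> = complex_of_real (1 / q ^ nat ((E + 1) div 2)) * (\<Sum>i<(N + 1) div 2. x ^ i)
      + z / complex_of_real q * complex_of_real (1 / q ^ nat (E div 2)) * (\<Sum>i<N div 2. x ^ i)"
    by (simp only: even odd sum_distrib_left)
  finally show ?thesis using assms(4) by (simp add: sum_gp_strict)
qed

section \<open>Discretely valued fields\<close>

locale discrete_valuation =
  fixes v :: "'a::field \<Rightarrow> int"
  assumes valuation: "discrete_val v"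
begin

lemma val_mult: "x \<noteq> 0 \<Longrightarrow> y \<noteq> 0 \<Longrightarrow> v (x * y) = v x + v y"
  using valuation unfolding discrete_val_def by blast

lemma val_add_ge: "x \<noteq> 0 \<Longrightarrow> y \<noteq> 0 \<Longrightarrow> x + y \<noteq> 0 \<Longrightarrow> min (v x) (v y) \<le> v (x + y)"
  using valuation unfolding discrete_val_def by blast

lemma val_one [simp]: "v 1 = 0"
  using val_mult[of 1 1] by simp

lemma val_minus [simp]: "v (- x) = v x"
proof (cases "x = 0")
  case False
  have "v (-1) = 0" using val_mult[of "-1" "-1"] by simp
  with False show ?thesis using val_mult[of "-1" x] by simp
qed simp

lemma val_divide: "x \<noteq> 0 \<Longrightarrow> y \<noteq> 0 \<Longrightarrow> v (x / y) = v x - v y"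
  using val_mult[of "x / y" y] by simp

lemma val_power: "x \<noteq> 0 \<Longrightarrow> v (x ^ n) = int n * v x"
  by (induction n) (simp_all add: val_mult algebra_simps)

lemma vge_iff: "x \<noteq> 0 \<Longrightarrow> vge v x N \<longleftrightarrow> N \<le> v x"
  unfolding vge_def by simp

lemma vge_add: "vge v a N \<Longrightarrow> vge v b N \<Longrightarrow> vge v (a + b) N"
  unfolding vge_def using val_add_ge[of a b] by fastforce

lemma vge_minus_iff [simp]: "vge v (- a) N \<longleftrightarrow> vge v a N"
  unfolding vge_def by simp

lemma vge_diff: "vge v a N \<Longrightarrow> vge v b N \<Longrightarrow> vge v (a - b) N"
  using vge_add[of a N "- b"] by simp

lemma vge_commute_diff: "vge v (a - b) N \<longleftrightarrow> vge v (b - a) N"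
  using vge_minus_iff[of "a - b" N] by simp

lemma vge_mono: "vge v a N \<Longrightarrow> M \<le> N \<Longrightarrow> vge v a M"
  unfolding vge_def by auto

lemma vge_mult: "vge v a N \<Longrightarrow> vge v b M \<Longrightarrow> vge v (a * b) (N + M)"
  unfolding vge_def by (cases "a = 0"; cases "b = 0") (auto simp: val_mult)

lemma val_add_dominated:
  assumes "x \<noteq> 0" "vge v y (v x + 1)"
  shows "x + y \<noteq> 0" and "v (x + y) = v x"
proof -
  have "x + y \<noteq> 0 \<and> v (x + y) = v x"
  proof (cases "y = 0")
    case False
    have less: "v x < v y" using assms False by (simp add: vge_def)
    have nz: "x + y \<noteq> 0"
    proof
      assume "x + y = 0"
      then have "y = - x" by (simp add: eq_neg_iff_add_eq_0 add.commute)
      then show False using less by simp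
    qed
    have "min (v (x + y)) (v (- y)) \<le> v (x + y + - y)"
      using val_add_ge[OF nz, of "- y"] False assms(1) by simp
    then have "v (x + y) \<le> v x" using less by simp
    moreover have "v x \<le> v (x + y)" using val_add_ge[OF assms(1) False nz] less by simp
    ultimately show ?thesis using nz by simp
  qed (use assms in simp)
  then show "x + y \<noteq> 0" and "v (x + y) = v x" by blast+
qed

lemma ints_add: "x \<in> ints v \<Longrightarrow> y \<in> ints v \<Longrightarrow> x + y \<in> ints v"
  unfolding ints_def using vge_add by auto

lemma ints_mult: "x \<in> ints v \<Longrightarrow> y \<in> ints v \<Longrightarrow> x * y \<in> ints v"
  unfolding ints_def using vge_mult[of x 0 y 0] by auto

lemma ints_one: "1 \<in> ints v"
  by (simp add: ints_def vge_def)

lemma val_two_nonneg: "(2::'a) \<noteq> 0 \<Longrightarrow> 0 \<le> v 2"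
  using ints_add[OF ints_one ints_one] by (simp add: ints_def vge_def)

lemma mem_pideal_iff:
  assumes "b \<noteq> 0"
  shows "z \<in> pideal v b \<longleftrightarrow> vge v z (v b)"
proof
  assume "z \<in> pideal v b"
  then obtain y where "z = b * y" "vge v y 0" unfolding pideal_def ints_def by auto
  then show "vge v z (v b)" using vge_mult[of b "v b" y 0] by (simp add: vge_def)
next
  assume "vge v z (v b)"
  then have "vge v (z / b) 0"
    using assms by (cases "z = 0") (auto simp: vge_def val_divide)
  moreover have "z = b * (z / b)" using assms by simp
  ultimately show "z \<in> pideal v b" unfolding pideal_def ints_def by blast
qed

lemma vball_eq_iff:
  assumes "x \<in> ints v" "y \<in> ints v"
  shows "vball v N x = vball v N y \<longleftrightarrow> vge v (x - y) (int N)"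
proof
  assume "vball v N x = vball v N y"
  moreover have "x \<in> vball v N x" using assms by (simp add: vball_def vge_def)
  ultimately show "vge v (x - y) (int N)" by (simp add: vball_def)
next
  assume "vge v (x - y) (int N)"
  then show "vball v N x = vball v N y"
    unfolding vball_def using vge_add[of _ _ "x - y"] vge_add[of _ _ "y - x"] vge_commute_diff[of x y]
    by force
qed

lemma vball_eq_of_mem:
  assumes "y \<in> vball v N x" "x \<in> ints v"
  shows "vball v N y = vball v N x"
  using assms vball_eq_iff[of y x N] by (simp add: vball_def)

lemma vball_Suc_classes_eq_UN:
  "vball v (Suc M) ` ints v = (\<Union>C\<in>vball v M ` ints v. vball v (Suc M) ` C)"
proof (intro equalityI subsetI)
  fix X assume "X \<in> vball v (Suc M) ` ints v"
  then obtain x where "x \<in> ints v" "X = vball v (Suc M) x" by blast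
  moreover then have "x \<in> vball v M x" by (simp add: vball_def vge_def)
  ultimately show "X \<in> (\<Union>C\<in>vball v M ` ints v. vball v (Suc M) ` C)" by blast
qed (auto simp: vball_def)

lemma disjoint_vball_Suc_classes:
  assumes "C \<in> vball v M ` ints v" "C' \<in> vball v M ` ints v" "C \<noteq> C'"
  shows "vball v (Suc M) ` C \<inter> vball v (Suc M) ` C' = {}"
proof (rule ccontr)
  assume "vball v (Suc M) ` C \<inter> vball v (Suc M) ` C' \<noteq> {}"
  then obtain y y' where y: "y \<in> C" "y' \<in> C'" "vball v (Suc M) y = vball v (Suc M) y'"
    by blast
  then have "vge v (y - y') (int M)"
    using assms vball_eq_iff[of y y' "Suc M"] vge_mono[of "y - y'" "int (Suc M)"]
    by (auto simp: vball_def)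
  then have "vball v M y = vball v M y'"
    using assms y vball_eq_iff[of y y' M] by (auto simp: vball_def)
  moreover have "C = vball v M y" "C' = vball v M y'"
    using assms y vball_eq_of_mem by auto
  ultimately show False using assms by simp
qed

end

locale uniformized_valuation = discrete_valuation +
  fixes \<pi> :: "'a::field"
  assumes uniformizer_nonzero: "\<pi> \<noteq> 0" and val_uniformizer: "v \<pi> = 1"
begin

lemma val_uniformizer_power [simp]: "v (\<pi> ^ K) = int K"
  using val_power[OF uniformizer_nonzero] val_uniformizer by simp

lemma vge_uniformizer_power_mult: "vge v (\<pi> ^ K * u) (int K + m) \<longleftrightarrow> vge v u m"
  using uniformizer_nonzero by (cases "u = 0") (auto simp: vge_def val_mult)

lemma uniformizer_power_in_ints: "\<pi> ^ K \<in> ints v"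
  by (simp add: ints_def vge_def)

lemma vball_eq_image:
  assumes "c \<in> ints v"
  shows "vball v K c = (\<lambda>y. c + \<pi> ^ K * y) ` ints v"
proof (intro equalityI subsetI)
  fix x assume x: "x \<in> vball v K c"
  let ?y = "(x - c) / \<pi> ^ K"
  have "vge v (\<pi> ^ K * ?y) (int K + 0)" using x uniformizer_nonzero by (simp add: vball_def)
  then have "?y \<in> ints v" by (simp only: vge_uniformizer_power_mult ints_def mem_Collect_eq)
  moreover have "x = c + \<pi> ^ K * ?y" using uniformizer_nonzero by simp
  ultimately show "x \<in> (\<lambda>y. c + \<pi> ^ K * y) ` ints v" by blast
next
  fix x assume "x \<in> (\<lambda>y. c + \<pi> ^ K * y) ` ints v"
  then obtain y where y: "y \<in> ints v" "x = c + \<pi> ^ K * y" by blast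
  then have "vge v (\<pi> ^ K * y) (int K + 0)"
    by (simp only: vge_uniformizer_power_mult) (simp add: ints_def)
  then show "x \<in> vball v K c"
    using y assms by (simp add: vball_def ints_add ints_mult uniformizer_power_in_ints)
qed

text \<open>The map \<open>y \<mapsto> c + \<pi>^K y\<close> sends the classes modulo \<open>\<pi>^M\<close> bijectively to the
  classes modulo \<open>\<pi>^(K + M)\<close> inside the ball.\<close>
lemma card_vball_classes_in_vball:
  assumes c: "c \<in> ints v"
  shows "card (vball v (K + M) ` vball v K c) = card (vball v M ` ints v)"
proof -
  have "vball v (K + M) ` vball v K c = (\<lambda>y. vball v (K + M) (c + \<pi> ^ K * y)) ` ints v"
    unfolding vball_eq_image[OF c] by (simp add: image_image)
  also have "card \<dots> = card (vball v M ` ints v)"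
  proof (rule card_image_eq_card_image)
    fix y y' assume y: "y \<in> ints v" "y' \<in> ints v"
    then have "c + \<pi> ^ K * y \<in> ints v" "c + \<pi> ^ K * y' \<in> ints v"
      using c by (simp_all add: ints_add ints_mult uniformizer_power_in_ints)
    moreover have "(c + \<pi> ^ K * y) - (c + \<pi> ^ K * y') = \<pi> ^ K * (y - y')"
      by (simp add: algebra_simps)
    ultimately show "vball v (K + M) (c + \<pi> ^ K * y) = vball v (K + M) (c + \<pi> ^ K * y')
        \<longleftrightarrow> vball v M y = vball v M y'"
      using vball_eq_iff y vge_uniformizer_power_mult[of K "y - y'" "int M"] by simp
  qed
  finally show ?thesis .
qed

lemma vball_image_vball_coarser:
  assumes "a \<in> ints v" "M \<le> N"
  shows "vball v M ` vball v N a = {vball v M a}"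
proof -
  have "vball v M x = vball v M a" if "x \<in> vball v N a" for x
    using that assms vge_mono[of "x - a" "int N" "int M"] by (intro vball_eq_of_mem) (auto simp: vball_def)
  moreover have "a \<in> vball v N a" using assms by (simp add: vball_def vge_def)
  ultimately show ?thesis by blast
qed

end

section \<open>Residue classes and Haar measure\<close>

locale local_valuation = uniformized_valuation +
  assumes finite_residue_classes: "finite (residue_classes v)"
begin

lemma resq_ge_2: "resq v \<ge> 2"
proof -
  have "0 \<in> ints v" "1 \<in> ints v" by (simp_all add: ints_def vge_def)
  then have "vball v 1 0 \<noteq> vball v 1 1" "{vball v 1 0, vball v 1 1} \<subseteq> residue_classes v"
    using vball_eq_iff[of 0 1 1] by (auto simp: vge_def residue_classes_def)
  then show ?thesis unfolding resq_def by (metis card_2_iff card_mono finite_residue_classes)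
qed

lemma card_vball_classes: "card (vball v M ` ints v) = resq v ^ M"
proof (induction M)
  case 0
  have "vball v 0 x = vball v 0 1" if "x \<in> ints v" for x
    using that ints_one vge_diff[of x 0 1] vball_eq_iff[of x 1 0] by (simp add: ints_def)
  then have "vball v 0 ` ints v = {vball v 0 1}" using ints_one by blast
  then show ?case by simp
next
  case (Suc M)
  let ?C = "vball v M ` ints v"
  have refine: "card (vball v (Suc M) ` C) = resq v" if "C \<in> ?C" for C
    using that card_vball_classes_in_vball[of _ M 1] by (auto simp: resq_def residue_classes_def)
  have "vball v (Suc M) ` ints v = (\<Union>C\<in>?C. vball v (Suc M) ` C)"
    by (rule vball_Suc_classes_eq_UN)
  also have "card \<dots> = (\<Sum>C\<in>?C. card (vball v (Suc M) ` C))"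
  proof (rule card_UN_disjoint)
    show "finite ?C" using Suc.IH resq_ge_2 by (intro card_ge_0_finite) simp
    show "\<forall>C\<in>?C. finite (vball v (Suc M) ` C)" using refine resq_ge_2 by (auto intro: card_ge_0_finite)
    show "\<forall>C\<in>?C. \<forall>C'\<in>?C. C \<noteq> C' \<longrightarrow> vball v (Suc M) ` C \<inter> vball v (Suc M) ` C' = {}"
      using disjoint_vball_Suc_classes by blast
  qed
  also have "\<dots> = resq v ^ Suc M" using refine Suc.IH by simp
  finally show ?case .
qed

lemma haar_vball:
  assumes a: "a \<in> ints v"
  shows "haar v (vball v N a) = 1 / real (resq v) ^ N"
proof -
  let ?q = "real (resq v)"
  have q: "?q \<ge> 1" using resq_ge_2 by simp
  define f where "f M = real (card (vball v M ` vball v N a)) / ?q ^ M" for M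
  have fine: "f (N + K) = 1 / ?q ^ N" for K
    using card_vball_classes_in_vball[OF a] card_vball_classes q by (simp add: f_def power_add)
  have "haar v (vball v N a) = Inf (range f)" by (simp add: haar_def f_def)
  also have "\<dots> = 1 / ?q ^ N"
  proof (rule cInf_eq_minimum)
    show "1 / ?q ^ N \<in> range f" using fine[of 0] by (metis add_0_right rangeI)
  next
    fix x assume "x \<in> range f"
    then obtain M where x: "x = f M" by blast
    show "1 / ?q ^ N \<le> x"
    proof (cases "M \<le> N")
      case True
      then have "f M = 1 / ?q ^ M" using vball_image_vball_coarser[OF a] by (simp add: f_def)
      moreover have "?q ^ M \<le> ?q ^ N" using q True by (simp add: power_increasing)
      ultimately show ?thesis using x q by (simp add: frac_le)
    next
      case False
      then obtain K where "M = N + K" by (metis le_add_diff_inverse nat_le_linear)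
      then show ?thesis using x fine by simp
    qed
  qed
  finally show ?thesis .
qed

lemma absv_le_absv_iff:
  assumes "x \<noteq> 0" "y \<noteq> 0"
  shows "absv v x \<le> absv v y \<longleftrightarrow> v y \<le> v x"
  using assms resq_ge_2 power_int_le_power_int_iff[of "real (resq v)"] by (simp add: absv_def)

lemma val_eq_of_absv_eq:
  assumes "x \<noteq> 0" "absv v x = real (resq v) powi (- n)"
  shows "v x = n"
  using assms resq_ge_2 power_int_le_power_int_iff[of "real (resq v)"]
  by (simp add: absv_def order_eq_iff)

lemma absv_uniformizer: "absv v \<pi> = 1 / real (resq v)"
  using uniformizer_nonzero val_uniformizer by (simp add: absv_def power_int_minus_divide)

end

section \<open>The quadratic defect of a nonsquare unit\<close>

locale nonsquare_unit = uniformized_valuation +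
  fixes \<Delta> :: "'a::field" and d :: nat
  assumes two_nonzero: "(2::'a) \<noteq> 0"
    and unit_nonzero: "\<Delta> \<noteq> 0" and val_unit: "v \<Delta> = 0"
    and not_square: "\<not> (\<exists>s. \<Delta> = s ^ 2)"
    and quadratic_defect: "qdefect v \<Delta> = pideal v (\<pi> ^ d)"
begin

lemma unit_minus_square_nonzero: "\<Delta> - s ^ 2 \<noteq> 0"
  using not_square by auto

lemma val_unit_minus_square_le: "v (\<Delta> - s ^ 2) \<le> int d"
proof -
  have "pideal v (\<Delta> - s ^ 2) \<in> {pideal v b | b. \<exists>s. \<Delta> - b = s ^ 2}" by force
  then have "qdefect v \<Delta> \<subseteq> pideal v (\<Delta> - s ^ 2)"
    unfolding qdefect_def by (rule Inter_lower)
  moreover have "\<pi> ^ d \<in> pideal v (\<pi> ^ d)"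
    using mem_pideal_iff[of "\<pi> ^ d"] uniformizer_nonzero by (simp add: vge_def)
  ultimately have "vge v (\<pi> ^ d) (v (\<Delta> - s ^ 2))"
    using quadratic_defect mem_pideal_iff[OF unit_minus_square_nonzero] by blast
  then show ?thesis using uniformizer_nonzero by (simp add: vge_def)
qed

lemma exists_val_unit_minus_square_eq: "\<exists>s. v (\<Delta> - s ^ 2) = int d"
proof (rule ccontr)
  assume "\<not> ?thesis"
  then have "v (\<Delta> - s ^ 2) \<noteq> int d" for s by blast
  then have less: "v (\<Delta> - s ^ 2) < int d" for s
    using val_unit_minus_square_le[of s] by (simp add: order_less_le)
  let ?p = "\<pi> ^ d / \<pi>"
  have p: "?p \<noteq> 0" "v ?p = int d - 1"
    using uniformizer_nonzero val_uniformizer by (simp_all add: val_divide)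
  have "?p \<in> qdefect v \<Delta>"
    unfolding qdefect_def
  proof (rule InterI)
    fix X assume "X \<in> {pideal v b | b. \<exists>s. \<Delta> - b = s ^ 2}"
    then obtain b s where X: "X = pideal v b" and "\<Delta> - b = s ^ 2" by blast
    then have "b = \<Delta> - s ^ 2" by (simp add: algebra_simps)
    then show "?p \<in> X"
      using X less[of s] p mem_pideal_iff[OF unit_minus_square_nonzero] by (simp add: vge_iff)
  qed
  then have "vge v ?p (int d)"
    using quadratic_defect mem_pideal_iff[of "\<pi> ^ d"] uniformizer_nonzero by simp
  then show False using p by (simp add: vge_iff)
qed

lemma exists_unit_val_unit_minus_square_eq:
  "\<exists>s. s \<noteq> 0 \<and> v s = 0 \<and> v (\<Delta> - s ^ 2) = int d"
proof (cases "d = 0")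
  case True
  have "min (v \<Delta>) (v (- 1)) \<le> v (\<Delta> + - 1)"
    using val_add_ge[OF unit_nonzero, of "- 1"] unit_minus_square_nonzero[of 1] by simp
  then have "v (\<Delta> - 1) = 0" using val_unit val_unit_minus_square_le[of 1] True by simp
  then show ?thesis using True by (intro exI[of _ 1]) simp
next
  case False
  obtain s where s: "v (\<Delta> - s ^ 2) = int d" using exists_val_unit_minus_square_eq by blast
  have "s \<noteq> 0" using s val_unit False by auto
  then have vs2: "v (- (s ^ 2)) = 2 * v s" using val_power[of s 2] by simp
  have "v s = 0"
  proof (rule ccontr)
    assume "v s \<noteq> 0"
    then consider "v s > 0" | "v s < 0" by linarith
    then show False
    proof cases
      case 1
      then have "vge v (- (s ^ 2)) (v \<Delta> + 1)" using vs2 val_unit by (simp add: vge_def)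
      then have "v (\<Delta> + - (s ^ 2)) = v \<Delta>" by (rule val_add_dominated(2)[OF unit_nonzero])
      then show False using s val_unit False by simp
    next
      case 2
      then have "vge v \<Delta> (v (- (s ^ 2)) + 1)" using vs2 val_unit by (simp add: vge_def)
      then have "v (- (s ^ 2) + \<Delta>) = v (- (s ^ 2))"
        using \<open>s \<noteq> 0\<close> by (intro val_add_dominated(2)) simp_all
      then show False using s vs2 2 by (simp add: add.commute)
    qed
  qed
  with \<open>s \<noteq> 0\<close> s show ?thesis by blast
qed

text \<open>A Newton step \<open>s + (\<Delta> - s\<^sup>2) / (2 s)\<close> from an approximate unit square root of
  \<open>\<Delta>\<close> attaining the defect leaves the error \<open>-(\<Delta> - s\<^sup>2)\<^sup>2 / (4 s\<^sup>2)\<close> of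
  valuation \<open>2 d - 2 v 2\<close>, which is bounded by \<open>d\<close>.\<close>
lemma defect_le_twice_val_two: "int d \<le> 2 * v 2"
proof -
  obtain s where s: "s \<noteq> 0" "v s = 0" "v (\<Delta> - s ^ 2) = int d"
    using exists_unit_val_unit_minus_square_eq by blast
  define u where "u = (\<Delta> - s ^ 2) / (2 * s)"
  have "2 * s * u = \<Delta> - s ^ 2" using s(1) two_nonzero by (simp add: u_def)
  then have "\<Delta> - (s + u) ^ 2 = - (u ^ 2)" by (simp add: power2_eq_square algebra_simps)
  moreover have "u \<noteq> 0" "v u = int d - v 2"
    using s two_nonzero unit_minus_square_nonzero by (simp_all add: u_def val_divide val_mult)
  ultimately show ?thesis using val_unit_minus_square_le[of "s + u"] val_power[of u 2] by simp
qed

end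

section \<open>The level sets of \<open>\<Delta> x\<^sup>2 - t\<^sup>2\<close>\<close>

locale scaled_square_target = nonsquare_unit +
  fixes t :: "'a::field" and T :: nat
  assumes target_nonzero: "t \<noteq> 0" and val_target: "v t = int T"
begin

lemma val_target_square: "v (- (t ^ 2)) = 2 * int T"
  using val_power[OF target_nonzero, of 2] val_target by simp

lemma form_minus_target_nonzero: "\<Delta> * x ^ 2 - t ^ 2 \<noteq> 0"
proof
  assume eq: "\<Delta> * x ^ 2 - t ^ 2 = 0"
  then have "x \<noteq> 0" using target_nonzero by auto
  then have "\<Delta> = (t / x) ^ 2" using eq by (simp add: field_simps)
  then show False using not_square by blast
qed

lemma val_form_minus_target_le: "v (\<Delta> * x ^ 2 - t ^ 2) \<le> 2 * int T + int d"
proof (cases "x \<noteq> 0 \<and> v x \<le> int T")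
  case True
  have "\<Delta> * x ^ 2 - t ^ 2 = x ^ 2 * (\<Delta> - (t / x) ^ 2)"
    using True by (simp add: field_simps)
  then have "v (\<Delta> * x ^ 2 - t ^ 2) = 2 * v x + v (\<Delta> - (t / x) ^ 2)"
    using True unit_minus_square_nonzero by (simp add: val_mult val_power)
  then show ?thesis using True val_unit_minus_square_le[of "t / x"] by simp
next
  case False
  have "vge v (\<Delta> * x ^ 2) (v (- (t ^ 2)) + 1)"
    using False val_target_square unit_nonzero val_unit
    by (cases "x = 0") (simp_all add: vge_def val_mult val_power)
  then have "v (- (t ^ 2) + \<Delta> * x ^ 2) = 2 * int T"
    using val_add_dominated(2)[of "- (t ^ 2)"] target_nonzero val_target_square by simp
  then show ?thesis by simp
qed

lemma exists_form_minus_target_attains: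
  "\<exists>a. a \<noteq> 0 \<and> v a = int T \<and> v (\<Delta> * a ^ 2 - t ^ 2) = 2 * int T + int d"
proof -
  obtain s where s: "s \<noteq> 0" "v s = 0" "v (\<Delta> - s ^ 2) = int d"
    using exists_unit_val_unit_minus_square_eq by blast
  have "\<Delta> * (t / s) ^ 2 - t ^ 2 = (t / s) ^ 2 * (\<Delta> - s ^ 2)"
    using s(1) by (simp add: field_simps)
  then have "v (\<Delta> * (t / s) ^ 2 - t ^ 2) = 2 * int T + int d"
    using s target_nonzero val_target unit_minus_square_nonzero
    by (simp add: val_mult val_power val_divide)
  then show ?thesis using s target_nonzero val_target by (intro exI[of _ "t / s"]) (simp add: val_divide)
qed

text \<open>Writing \<open>x = a + h\<close>, we have
  \<open>\<Delta> x\<^sup>2 - t\<^sup>2 = \<Delta> h (2 a + h) + (\<Delta> a\<^sup>2 - t\<^sup>2)\<close>; since \<open>d \<le> 2 v 2\<close>, the first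
  summand has valuation at least \<open>n\<close> exactly when \<open>v h \<ge> \<lceil>n/2\<rceil>\<close>, and otherwise it
  has valuation \<open>2 v h < n\<close> and dominates.\<close>
lemma vge_form_minus_target_iff:
  assumes a: "a \<noteq> 0" "v a = int T" "v (\<Delta> * a ^ 2 - t ^ 2) = 2 * int T + int d"
    and n: "n \<le> 2 * int T + int d"
  shows "vge v (\<Delta> * x ^ 2 - t ^ 2) n \<longleftrightarrow> vge v (x - a) ((n + 1) div 2)"
proof -
  let ?c = "(n + 1) div 2"
  define h where "h = x - a"
  have decomp: "\<Delta> * x ^ 2 - t ^ 2 = \<Delta> * h * (2 * a + h) + (\<Delta> * a ^ 2 - t ^ 2)"
    unfolding h_def by (simp add: algebra_simps power2_eq_square)
  have two_a: "2 * a \<noteq> 0" "v (2 * a) = v 2 + int T"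
    using two_nonzero a by (simp_all add: val_mult)
  have dle: "int d \<le> 2 * v 2" by (rule defect_le_twice_val_two)
  show ?thesis
  proof
    assume "vge v (x - a) ?c"
    then have h: "vge v h ?c" by (simp add: h_def)
    let ?m = "min (v 2 + int T) ?c"
    have "vge v (\<Delta> * h) (0 + ?c)"
      using vge_mult[of \<Delta> 0 h ?c] h val_unit by (simp add: vge_def)
    moreover have "vge v (2 * a + h) ?m"
      using two_a vge_mono[OF h, of ?m] by (intro vge_add) (simp_all add: vge_def)
    ultimately have "vge v (\<Delta> * h * (2 * a + h)) (0 + ?c + ?m)" by (rule vge_mult)
    moreover have "n \<le> 0 + ?c + ?m" using n dle by (simp add: min_def) linarith
    ultimately have "vge v (\<Delta> * h * (2 * a + h)) n" by (rule vge_mono)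
    moreover have "vge v (\<Delta> * a ^ 2 - t ^ 2) n" using a n by (simp add: vge_def)
    ultimately show "vge v (\<Delta> * x ^ 2 - t ^ 2) n" unfolding decomp by (rule vge_add)
  next
    assume hv: "vge v (\<Delta> * x ^ 2 - t ^ 2) n"
    show "vge v (x - a) ?c"
    proof (rule ccontr)
      assume "\<not> vge v (x - a) ?c"
      then have h: "h \<noteq> 0" "2 * v h < n" by (auto simp: h_def vge_def)
      then have "vge v (2 * a) (v h + 1)" using two_a n dle by (simp add: vge_def)
      then have "h + 2 * a \<noteq> 0" "v (h + 2 * a) = v h"
        using val_add_dominated[OF h(1)] by simp_all
      then have p: "\<Delta> * h * (2 * a + h) \<noteq> 0" "v (\<Delta> * h * (2 * a + h)) = 2 * v h"
        using h unit_nonzero val_unit by (simp_all add: val_mult add.commute)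
      then have "vge v (\<Delta> * a ^ 2 - t ^ 2) (v (\<Delta> * h * (2 * a + h)) + 1)"
        using a h n by (simp add: vge_def)
      then have "v (\<Delta> * x ^ 2 - t ^ 2) = 2 * v h"
        unfolding decomp using val_add_dominated(2)[OF p(1)] p(2) by simp
      then show False using hv h form_minus_target_nonzero[of x] by (simp add: vge_def)
    qed
  qed
qed

end

locale local_scaled_square_target =
  scaled_square_target v \<pi> \<Delta> d t T + local_valuation v \<pi>
  for v :: "'a::field \<Rightarrow> int" and \<pi> \<Delta> d t T
begin

lemma Xl_scaled_square:
  "Xl v \<pi> (\<lambda>x. \<Delta> * x ^ 2) (t ^ 2) l =
    (if v 2 + int l \<le> 2 * int T + int d
     then 1 / real (resq v) ^ nat ((v 2 + int l + 1) div 2) else 0)"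
proof -
  let ?n = "v 2 + int l"
  have "2 * \<pi> ^ l \<noteq> 0" "v (2 * \<pi> ^ l) = ?n"
    using two_nonzero uniformizer_nonzero by (simp_all add: val_mult)
  then have level_set: "{x \<in> ints v. \<Delta> * x ^ 2 - t ^ 2 \<in> pideal v (2 * \<pi> ^ l)}
      = {x \<in> ints v. vge v (\<Delta> * x ^ 2 - t ^ 2) ?n}"
    using mem_pideal_iff by simp
  show ?thesis
  proof (cases "?n \<le> 2 * int T + int d")
    case True
    obtain a where a: "a \<noteq> 0" "v a = int T" "v (\<Delta> * a ^ 2 - t ^ 2) = 2 * int T + int d"
      using exists_form_minus_target_attains by blast
    have "int (nat ((?n + 1) div 2)) = (?n + 1) div 2"
      using val_two_nonneg[OF two_nonzero] by simp
    then have "{x \<in> ints v. vge v (\<Delta> * x ^ 2 - t ^ 2) ?n} = vball v (nat ((?n + 1) div 2)) a"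
      unfolding vball_def using vge_form_minus_target_iff[OF a True] by simp
    moreover have "a \<in> ints v" using a by (simp add: ints_def vge_def)
    ultimately show ?thesis using True level_set haar_vball by (simp add: Xl_def)
  next
    case False
    then have "\<not> vge v (\<Delta> * x ^ 2 - t ^ 2) ?n" for x
      using val_form_minus_target_le[of x] form_minus_target_nonzero[of x] by (simp add: vge_iff)
    then have empty: "{x \<in> ints v. vge v (\<Delta> * x ^ 2 - t ^ 2) ?n} = {}" by blast
    show ?thesis using False unfolding Xl_def level_set empty by (simp add: haar_def)
  qed
qed

lemma XB_scaled_square_eq_0:
  assumes "\<not> v 2 \<le> 2 * int T + int d"
  shows "XB v \<pi> (\<lambda>x. \<Delta> * x ^ 2) \<beta> (t ^ 2) = 0"
  using assms by (simp add: XB_def Xl_scaled_square)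

lemma XB_scaled_square:
  fixes \<beta> z w :: complex
  assumes z: "z = of_nat (resq v) powr (- \<beta>)" and w: "w = z / of_nat (resq v)"
    and "v 2 \<le> 2 * int T + int d" and "z * w \<noteq> 1"
  shows "XB v \<pi> (\<lambda>x. \<Delta> * x ^ 2) \<beta> (t ^ 2)
    = complex_of_real (absv v \<pi> powi \<lceil>real_of_int (v 2) / 2\<rceil>)
        * (1 - (z * w) powi (int T + \<lceil>real_of_int (int d + 1 - v 2) / 2\<rceil>)) / (1 - z * w)
      + w * complex_of_real (absv v \<pi> powi \<lfloor>real_of_int (v 2) / 2\<rfloor>)
        * (1 - (z * w) powi (int T + \<lfloor>real_of_int (int d + 1 - v 2) / 2\<rfloor>)) / (1 - z * w)"
proof -
  let ?q = "real (resq v)" and ?e = "v 2"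
  define N where "N = nat (2 * int T + int d - ?e + 1)"
  have e: "0 \<le> ?e" using val_two_nonneg[OF two_nonzero] .
  have w_real: "w = z / complex_of_real ?q" by (simp add: w)
  have "XB v \<pi> (\<lambda>x. \<Delta> * x ^ 2) \<beta> (t ^ 2)
      = (\<Sum>l\<in>{..<N}. z ^ l * complex_of_real (Xl v \<pi> (\<lambda>x. \<Delta> * x ^ 2) (t ^ 2) l))"
    unfolding XB_def z by (rule suminf_finite) (auto simp: N_def Xl_scaled_square)
  also have "\<dots> = (\<Sum>l<N. z ^ l * complex_of_real (1 / ?q ^ nat ((?e + int l + 1) div 2)))"
    by (rule sum.cong) (auto simp: N_def Xl_scaled_square)
  also have "\<dots> = complex_of_real (1 / ?q ^ nat ((?e + 1) div 2))
        * (1 - (z * w) ^ ((N + 1) div 2)) / (1 - z * w)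
      + w * complex_of_real (1 / ?q ^ nat (?e div 2)) * (1 - (z * w) ^ (N div 2)) / (1 - z * w)"
    using sum_ceiling_half_powers[of ?q ?e z N] resq_ge_2 e assms(4) unfolding w_real by simp
  finally have sum: "XB v \<pi> (\<lambda>x. \<Delta> * x ^ 2) \<beta> (t ^ 2) = \<dots>" .
  have "int ((N + 1) div 2) = int T + (int d + 1 - ?e + 1) div 2"
    "int (N div 2) = int T + (int d + 1 - ?e) div 2"
    using assms(3) by (simp_all add: N_def zdiv_int)
  then have "(z * w) ^ ((N + 1) div 2) = (z * w) powi (int T + (int d + 1 - ?e + 1) div 2)"
    "(z * w) ^ (N div 2) = (z * w) powi (int T + (int d + 1 - ?e) div 2)"
    by (metis power_int_of_nat)+
  moreover have "1 / ?q ^ nat ((?e + 1) div 2) = absv v \<pi> powi ((?e + 1) div 2)"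
    "1 / ?q ^ nat (?e div 2) = absv v \<pi> powi (?e div 2)"
    using e by (simp_all add: absv_uniformizer power_int_nonneg_exp power_one_over)
  ultimately show ?thesis using sum unfolding ceiling_half_of_int floor_half_of_int by simp
qed

end

theorem proposition5p1:
  fixes v :: "'a::field \<Rightarrow> int" and \<pi> \<Delta> t :: 'a and d T :: nat and \<beta> :: complex
  assumes lf: "nonarch_local_field v"
    and char0: "(2::'a) \<noteq> 0"
    and res2: "vge v 2 1"
    and unif: "\<pi> \<noteq> 0" "v \<pi> = 1"
    and unit: "\<Delta> \<noteq> 0" "v \<Delta> = 0"
    and nonsq: "\<not> (\<exists>s. \<Delta> = s ^ 2)"
    and defect: "qdefect v \<Delta> = pideal v (\<pi> ^ d)"
    and tnz: "t \<noteq> 0" "t \<in> ints v"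
    and tabs: "absv v t = real (resq v) powi (- int T)"
  shows "let q = resq v; e = v 2; z = of_nat q powr (- \<beta>); w = z / of_nat q;
             X = XB v \<pi> (\<lambda>x. \<Delta> * x ^ 2) \<beta> (t ^ 2) in
     (absv v 2 \<ge> absv v (\<pi> ^ d * t ^ 2) \<longrightarrow> z * w \<noteq> 1 \<longrightarrow>
        X = complex_of_real (absv v \<pi> powi \<lceil>real_of_int e / 2\<rceil>)
              * (1 - (z * w) powi (int T + \<lceil>real_of_int (int d + 1 - e) / 2\<rceil>)) / (1 - z * w)
          + w * complex_of_real (absv v \<pi> powi \<lfloor>real_of_int e / 2\<rfloor>)
              * (1 - (z * w) powi (int T + \<lfloor>real_of_int (int d + 1 - e) / 2\<rfloor>)) / (1 - z * w))
     \<and> (\<not> absv v 2 \<ge> absv v (\<pi> ^ d * t ^ 2) \<longrightarrow> X = 0)"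
proof -
  interpret local_valuation v \<pi>
    using lf unif by unfold_locales (auto simp: nonarch_local_field_def)
  have "v t = int T" using val_eq_of_absv_eq[OF tnz(1) tabs] .
  then interpret local_scaled_square_target v \<pi> \<Delta> d t T
    using char0 unit nonsq defect tnz(1) by unfold_locales
  have "v (\<pi> ^ d * t ^ 2) = 2 * int T + int d"
    using tnz(1) \<open>v t = int T\<close> uniformizer_nonzero by (simp add: val_mult val_power)
  then have "absv v 2 \<ge> absv v (\<pi> ^ d * t ^ 2) \<longleftrightarrow> v 2 \<le> 2 * int T + int d"
    using absv_le_absv_iff[of "\<pi> ^ d * t ^ 2" 2] char0 tnz(1) uniformizer_nonzero by simp
  then show ?thesis
    using XB_scaled_square[OF refl refl] XB_scaled_square_eq_0 by (simp add: Let_def)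
qed

end
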